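(* For every integer $n\geq 2$: $\mathcal{C}_{B}(n,1)=n!$, $\mathcal{C}_{B}(n,2)=(n-1)!$, and $\mathcal{C}_{B}(n,n-1)\leqslant n$, with equality $\mathcal{C}_{B}(n,n-1)=n$ whenever $n\notin\{3,5\}$.
   Context: Let $S_n$ be the symmetric group on $[n]=\{1,\dots,n\}$; a permutation is written in vector notation $\pi=(\pi(1),\dots,\pi(n))$. A permutation $\sigma\in S_m$ is called minimal if $\sigma(i+1)\neq\sigma(i)+1$ for all $1\leqslant i\leqslant m-1$. The block permutation distance $d_B(\pi_1,\pi_2)$ between $\pi_1,\pi_2\in S_n$ equals $d$ if $\pi_1=(\psi_1,\psi_2,\dots,\psi_{d+1})$ and $\pi_2=(\psi_{\sigma(1)},\dots,\psi_{\sigma(d+1)})$ for some minimal $\sigma\in S_{d+1}$, where $\psi_k=(\pi_1(i_{k-1}+1),\dots,\pi_1(i_k))$ for some indices $0=i_0<i_1<\dots<i_{d+1}=n$. Equivalently, with the characteristic set $A(\pi)=\{(\pi(i),\pi(i+1)):1\leqslant i<n\}$, one has $d_B(\pi_1,\pi_2)=|A(\pi_1)\setminus A(\pi_2)|$. For positive integers $n,d$, an $(n,d)$-permutation code is a subset $\mathcal{C}\subseteq S_n$ with $d_B(\sigma,\pi)\geqslant d$ for all distinct $\sigma,\pi\in\mathcal{C}$, and $\mathcal{C}_B(n,d)$ denotes the maximum size of such a code. *)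

theory Defs
  imports Main
begin

text \<open>Permutations of [n] in vector notation, as lists (p ! (i-1) = pi(i)).\<close>
definition perms :: "nat \<Rightarrow> nat list set" where
  "perms n = {p. distinct p \<and> set p = {1..n}}"

definition charset :: "nat list \<Rightarrow> (nat \<times> nat) set" where
  "charset p = {(p ! i, p ! (i + 1)) | i. i + 1 < length p}"

definition dB :: "nat list \<Rightarrow> nat list \<Rightarrow> nat" where
  "dB p q = card (charset p - charset q)"

definition is_perm_code :: "nat \<Rightarrow> nat \<Rightarrow> nat list set \<Rightarrow> bool" where
  "is_perm_code n d C \<longleftrightarrow> C \<subseteq> perms n \<and>
     (\<forall>s\<in>C. \<forall>p\<in>C. s \<noteq> p \<longrightarrow> d \<le> dB s p)"

definition CB :: "nat \<Rightarrow> nat \<Rightarrow> nat" where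
  "CB n d = Max (card ` {C. is_perm_code n d C})"

end

theory Submission
  imports Defs "HOL-Combinatorics.Multiset_Permutations"
begin

(*
  A permutation is determined by its set A of adjacent pairs, so distinct permutations are at
  distance at least 1. Rotating a permutation preserves its cyclic adjacency set, and permutations
  with the same cyclic adjacency set are at distance at most 1; so rotating the words of a code of
  distance 2 to start with 1 is injective. Conversely, permutations with the same first entry at
  distance at most 1 coincide, so the (n - 1)! permutations starting with 1 form a code.

  In a code of distance n - 1 the sets A are pairwise disjoint, each of size n - 1, inside the
  n (n - 1) off-diagonal pairs; so there are at most n codewords. For even n, the Walecki paths
  i, i + 1, i - 1, i + 2, i - 2, ... (mod n) have pairwise disjoint sets A. For odd n + 1, the
  Walecki paths closed up through an extra vertex \<infinity> are n arc-disjoint Hamiltonian cycles; if a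
  Hamiltonian path R meets each of them in at most one arc, cutting every cycle open at that arc
  gives, together with R, n + 1 paths with pairwise disjoint sets A. Such transversal paths R are
  given explicitly for n + 1 = 4p + 3 (p \<ge> 2) and n + 1 = 4p + 1 (p \<ge> 3), and by hand for
  n + 1 = 7 and 9.
*)

section \<open>Adjacency sets of lists\<close>

lemma charset_Nil [simp]: "charset [] = {}"
  by (auto simp: charset_def)

lemma charset_singleton [simp]: "charset [x] = {}"
  by (auto simp: charset_def)

lemma charset_eq_set_zip: "charset xs = set (zip xs (tl xs))"
  by (auto simp: charset_def set_zip nth_tl)

lemma charset_Cons_Cons [simp]: "charset (x # y # xs) = insert (x, y) (charset (y # xs))"
  by (simp add: charset_eq_set_zip)

lemma charset_Cons: "charset (x # xs) = (if xs = [] then {} else insert (x, hd xs) (charset xs))"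
  by (cases xs) auto

lemma finite_charset [simp]: "finite (charset xs)"
  by (induction xs rule: induct_list012) auto

lemma charset_subset_set: "charset xs \<subseteq> set xs \<times> set xs"
  by (induction xs rule: induct_list012) auto

lemma charset_append:
  "charset (xs @ ys) =
    charset xs \<union> charset ys \<union> (if xs = [] \<or> ys = [] then {} else {(last xs, hd ys)})"
  by (induction xs rule: induct_list012) (auto simp: charset_Cons)

lemma charset_map: "charset (map f xs) = map_prod f f ` charset xs"
  by (induction xs rule: induct_list012) auto

lemma charset_map_upt: "charset (map g [0..<m]) = {(g t, g (Suc t)) | t. Suc t < m}"
  by (force simp: charset_def)

lemma card_charset: "distinct xs \<Longrightarrow> card (charset xs) = length xs - 1"
proof (induction xs rule: induct_list012)
  case (3 x y zs)
  then have "(x, y) \<notin> charset (y # zs)"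
    using charset_subset_set by fastforce
  with 3 show ?case
    by simp
qed auto

lemma charset_subset_offdiag: "distinct xs \<Longrightarrow> charset xs \<subseteq> set xs \<times> set xs - Id"
  by (induction xs rule: induct_list012) (auto dest: subsetD[OF charset_subset_set])

lemma hd_notin_Range_charset: "distinct xs \<Longrightarrow> (a, hd xs) \<notin> charset xs"
  by (cases xs rule: remdups_adj.cases) (auto dest: subsetD[OF charset_subset_set])

lemma in_Range_charset: "b \<in> set xs \<Longrightarrow> b \<noteq> hd xs \<Longrightarrow> \<exists>a. (a, b) \<in> charset xs"
  by (induction xs rule: induct_list012) auto

lemma charset_Cons_diff_Cons:
  assumes "a \<notin> set p" "a \<notin> set q" "p \<noteq> []" "q \<noteq> []"
  shows "charset (a # p) - charset (a # q) =
    (if hd p = hd q then {} else {(a, hd p)}) \<union> (charset p - charset q)"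
  using assms by (auto simp: charset_Cons dest: subsetD[OF charset_subset_set])

lemma list_eq_if_hd_eq_charset_subset:
  "distinct p \<Longrightarrow> distinct q \<Longrightarrow> set p = set q \<Longrightarrow> hd p = hd q \<Longrightarrow>
    charset p \<subseteq> charset q \<Longrightarrow> p = q"
proof (induction p arbitrary: q)
  case (Cons a p)
  then obtain q' where q: "q = a # q'"
    by (cases q) auto
  with Cons.prems have a: "a \<notin> set p" "a \<notin> set q'" and distinct: "distinct p" "distinct q'"
    by auto
  with Cons.prems q have set_eq: "set p = set q'"
    by auto
  show ?case
  proof (cases "p = []")
    case False
    with set_eq have "q' \<noteq> []"
      by auto
    with Cons.prems(5) q have "hd p = hd q'" "charset p \<subseteq> charset q'"
      using charset_Cons_diff_Cons[OF a False] by (auto split: if_splits)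
    with Cons.IH[OF distinct set_eq] q show ?thesis
      by simp
  qed (use set_eq q in simp)
qed simp

lemma list_eq_if_charset_subset:
  assumes "distinct p" "distinct q" "set p = set q" "charset p \<subseteq> charset q"
  shows "p = q"
proof (cases "p = []")
  case False
  have "length p = length q"
    using assms by (metis distinct_card)
  then have "charset p = charset q"
    using assms by (simp add: card_charset card_subset_eq)
  moreover have "hd p \<in> set q"
    using hd_in_set[OF False] assms(3) by simp
  ultimately have "hd p = hd q"
    using in_Range_charset hd_notin_Range_charset[OF assms(1)] by metis
  with assms show ?thesis
    by (intro list_eq_if_hd_eq_charset_subset)
qed (use assms in simp)

lemma list_eq_if_hd_eq_dB_le_1:
  "distinct p \<Longrightarrow> distinct q \<Longrightarrow> set p = set q \<Longrightarrow> hd p = hd q \<Longrightarrow> dB p q \<le> 1 \<Longrightarrow> p = q"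
proof (induction p arbitrary: q)
  case (Cons a p)
  then obtain q' where q: "q = a # q'"
    by (cases q) auto
  with Cons.prems have a: "a \<notin> set p" "a \<notin> set q'" and distinct: "distinct p" "distinct q'"
    by auto
  with Cons.prems q have set_eq: "set p = set q'"
    by auto
  show ?case
  proof (cases "p = []")
    case False
    with set_eq have "q' \<noteq> []"
      by auto
    note diff = charset_Cons_diff_Cons[OF a False this]
    show ?thesis
    proof (cases "hd p = hd q'")
      case True
      with diff Cons.prems(5) q have "dB p q' \<le> 1"
        by (simp add: dB_def)
      with Cons.IH[OF distinct set_eq True] q show ?thesis
        by simp
    next
      case False
      have "(a, hd p) \<notin> charset p - charset q'"
        using a by (auto dest: subsetD[OF charset_subset_set])
      with Cons.prems(5) False diff q have "card (charset p - charset q') = 0"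
        by (simp add: dB_def)
      then have "charset p \<subseteq> charset q'"
        by simp
      with distinct set_eq have "p = q'"
        by (intro list_eq_if_charset_subset)
      with False show ?thesis
        by simp
    qed
  qed (use set_eq q in simp)
qed simp

definition cyclic_charset :: "nat list \<Rightarrow> (nat \<times> nat) set" where
  "cyclic_charset xs = charset xs \<union> (if xs = [] then {} else {(last xs, hd xs)})"

lemma cyclic_charset_append_commute: "cyclic_charset (us @ vs) = cyclic_charset (vs @ us)"
  by (cases "us = [] \<or> vs = []") (auto simp: cyclic_charset_def charset_append)

lemma cyclic_charset_rotate [simp]: "cyclic_charset (rotate k xs) = cyclic_charset xs"
  by (metis append_take_drop_id cyclic_charset_append_commute rotate_drop_take)

lemma charset_subset_cyclic_charset: "charset xs \<subseteq> cyclic_charset xs"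
  by (simp add: cyclic_charset_def)

lemma dB_le_1_if_cyclic_charset_eq:
  assumes "cyclic_charset p = cyclic_charset q"
  shows "dB p q \<le> 1"
proof -
  have "charset p - charset q \<subseteq> {(last q, hd q)}"
    using assms charset_subset_cyclic_charset[of p] by (auto simp: cyclic_charset_def split: if_splits)
  then show ?thesis
    unfolding dB_def using card_mono[of "{(last q, hd q)}"] by fastforce
qed

lemma in_charset_imp_split:
  "e \<in> charset xs \<Longrightarrow> \<exists>us vs. xs = us @ vs \<and> us \<noteq> [] \<and> vs \<noteq> [] \<and> e = (last us, hd vs)"
proof (induction xs rule: induct_list012)
  case (3 x y zs)
  show ?case
  proof (cases "e = (x, y)")
    case True
    then show ?thesis
      by (intro exI[of _ "[x]"] exI[of _ "y # zs"]) simp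
  next
    case False
    with "3.prems" obtain us vs
      where "y # zs = us @ vs" "us \<noteq> []" "vs \<noteq> []" "e = (last us, hd vs)"
      using "3.IH"(2) by auto
    then show ?thesis
      by (intro exI[of _ "x # us"] exI[of _ vs]) simp
  qed
qed simp_all

lemma cut_cyclic_charset:
  assumes "distinct xs" "e \<in> cyclic_charset xs"
  shows "\<exists>ys. distinct ys \<and> set ys = set xs \<and> charset ys = cyclic_charset xs - {e}"
proof (cases "e \<in> charset xs")
  case True
  then obtain us vs where split: "xs = us @ vs" "us \<noteq> []" "vs \<noteq> []" "e = (last us, hd vs)"
    using in_charset_imp_split by blast
  have "distinct (vs @ us)"
    using assms(1) split(1) by auto
  then have "e \<notin> charset (vs @ us)"
    using hd_notin_Range_charset[of "vs @ us"] split(3,4) by simp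
  moreover have "cyclic_charset xs = insert e (charset (vs @ us))"
    using split by (simp add: cyclic_charset_def charset_append Un_ac insert_commute)
  ultimately show ?thesis
    using \<open>distinct (vs @ us)\<close> split(1) by (intro exI[of _ "vs @ us"]) auto
next
  case False
  with assms(2) have "e = (last xs, hd xs)" "cyclic_charset xs = insert e (charset xs)"
    by (auto simp: cyclic_charset_def split: if_splits)
  with False assms(1) show ?thesis
    by (intro exI[of _ xs]) auto
qed

lemma cut_cycle_avoiding:
  assumes "distinct xs" "charset R \<inter> cyclic_charset xs \<subseteq> {e}"
  shows "\<exists>ys. distinct ys \<and> set ys = set xs \<and>
    charset ys \<subseteq> cyclic_charset xs \<and> charset ys \<inter> charset R = {}"
proof (cases "e \<in> cyclic_charset xs")
  case True
  with assms show ?thesis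
    using cut_cyclic_charset[OF assms(1) True] by blast
next
  case False
  with assms show ?thesis
    using charset_subset_cyclic_charset[of xs] by blast
qed

section \<open>Codes of minimum distance 1 and 2\<close>

lemma perms_eq_permutations_of_set: "perms n = permutations_of_set {1..n}"
  by (auto simp: perms_def permutations_of_set_def)

lemma finite_perms [simp]: "finite (perms n)"
  by (simp add: perms_eq_permutations_of_set)

lemma card_perms: "card (perms n) = fact n"
  by (simp add: perms_eq_permutations_of_set)

lemma length_perms:
  assumes "p \<in> perms n"
  shows "length p = n"
  using assms distinct_card[of p] by (simp add: perms_def)

lemma card_charset_perms: "p \<in> perms n \<Longrightarrow> card (charset p) = n - 1"
  using length_perms[of p n] by (simp add: card_charset perms_def)

lemma finite_perm_codes: "finite {C. is_perm_code n d C}"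
  by (rule finite_subset[of _ "Pow (perms n)"]) (auto simp: is_perm_code_def)

lemma card_le_CB: "is_perm_code n d C \<Longrightarrow> card C \<le> CB n d"
  unfolding CB_def using finite_perm_codes by (intro Max_ge) auto

lemma CB_le:
  assumes "\<And>C. is_perm_code n d C \<Longrightarrow> card C \<le> c"
  shows "CB n d \<le> c"
proof -
  have "is_perm_code n d {}"
    by (simp add: is_perm_code_def)
  then show ?thesis
    unfolding CB_def using finite_perm_codes assms by (subst Max_le_iff) auto
qed

lemma CB_eqI:
  assumes "is_perm_code n d C" "card C = c" "\<And>C. is_perm_code n d C \<Longrightarrow> card C \<le> c"
  shows "CB n d = c"
  using CB_le[of n d c] card_le_CB[of n d C] assms by force

lemma CB_1: "CB n 1 = fact n"
proof (rule CB_eqI)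
  have "charset p - charset q \<noteq> {}" if "p \<in> perms n" "q \<in> perms n" "p \<noteq> q" for p q
    using that list_eq_if_charset_subset by (auto simp: perms_def)
  then show "is_perm_code n 1 (perms n)"
    by (simp add: is_perm_code_def dB_def Suc_le_eq card_gt_0_iff)
  show "card C \<le> fact n" if "is_perm_code n 1 C" for C
    using that card_mono[of "perms n" C] by (simp add: is_perm_code_def card_perms)
qed (rule card_perms)

lemma is_perm_code_perms_hd_1: "is_perm_code n 2 {p \<in> perms n. hd p = 1}"
  unfolding is_perm_code_def
  by (auto simp: perms_def dest: list_eq_if_hd_eq_dB_le_1)

lemma card_perms_hd_1:
  assumes "n \<ge> 1"
  shows "card {p \<in> perms n. hd p = 1} = fact (n - 1)"
proof -
  have "{p \<in> perms n. hd p = 1} = (#) 1 ` permutations_of_set {2..n}"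
  proof (intro set_eqI iffI)
    fix p
    assume p: "p \<in> {p \<in> perms n. hd p = 1}"
    with assms obtain xs where "p = 1 # xs"
      by (cases p) (auto simp: perms_def)
    moreover have "set xs = {1..n} - {1}"
      using p \<open>p = 1 # xs\<close> by (auto simp: perms_def)
    moreover have "{1..n} - {1} = {2..n}"
      by auto
    ultimately show "p \<in> (#) 1 ` permutations_of_set {2..n}"
      using p by (auto simp: perms_def permutations_of_set_def)
  next
    fix p
    assume "p \<in> (#) 1 ` permutations_of_set {2..n}"
    then show "p \<in> {p \<in> perms n. hd p = 1}"
      using assms by (auto simp: perms_def permutations_of_set_def)
  qed
  then show ?thesis
    by (simp add: card_image)
qed

lemma card_le_fact_if_code_2:
  assumes C: "is_perm_code n 2 C" and "n \<ge> 1"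
  shows "card C \<le> fact (n - 1)"
proof -
  have rotatable: "\<exists>k. hd (rotate k p) = 1" if "p \<in> perms n" for p
  proof -
    from that \<open>n \<ge> 1\<close> have "1 \<in> set p"
      by (simp add: perms_def)
    then obtain i where "i < length p" "p ! i = 1"
      by (metis in_set_conv_nth)
    then have "hd (rotate i p) = 1"
      by (subst hd_rotate_conv_nth) auto
    then show ?thesis ..
  qed
  define rot where "rot p = rotate (SOME k. hd (rotate k p) = 1) p" for p :: "nat list"
  have rot: "rot p \<in> {p \<in> perms n. hd p = 1}" if "p \<in> perms n" for p
    using that someI_ex[OF rotatable[OF that]] by (simp add: rot_def perms_def)
  have "inj_on rot C"
  proof (rule inj_onI)
    fix p q
    assume "p \<in> C" "q \<in> C" "rot p = rot q"
    then have "dB p q \<le> 1"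
      by (intro dB_le_1_if_cyclic_charset_eq) (metis rot_def cyclic_charset_rotate)
    with C \<open>p \<in> C\<close> \<open>q \<in> C\<close> show "p = q"
      unfolding is_perm_code_def by force
  qed
  then have "card C = card (rot ` C)"
    by (simp add: card_image)
  also have "\<dots> \<le> card {p \<in> perms n. hd p = 1}"
    using C rot by (intro card_mono) (auto simp: is_perm_code_def)
  finally show ?thesis
    using card_perms_hd_1[OF \<open>n \<ge> 1\<close>] by simp
qed

lemma CB_2: "n \<ge> 1 \<Longrightarrow> CB n 2 = fact (n - 1)"
  using CB_eqI[OF is_perm_code_perms_hd_1 card_perms_hd_1] card_le_fact_if_code_2 by blast

section \<open>Codes of minimum distance n - 1\<close>

lemma card_Times_minus_Id: "finite A \<Longrightarrow> card (A \<times> A - Id) = card A * (card A - 1)"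
proof -
  assume "finite A"
  have "A \<times> A - Id = A \<times> A - Id_on A"
    by auto
  moreover have "Id_on A = (\<lambda>x. (x, x)) ` A"
    by auto
  then have "card (Id_on A) = card A"
    by (simp add: card_image inj_on_def)
  ultimately show ?thesis
    using \<open>finite A\<close> Id_on_subset_Times[of A]
    by (simp add: card_Diff_subset finite_subset card_cartesian_product diff_mult_distrib2)
qed

lemma charset_disjoint_if_card_le_dB:
  "card (charset p) \<le> dB p q \<Longrightarrow> charset p \<inter> charset q = {}"
proof -
  assume "card (charset p) \<le> dB p q"
  then have "charset p - charset q = charset p"
    unfolding dB_def by (meson Diff_subset card_seteq finite_charset)
  then show ?thesis
    by blast
qed

lemma CB_n_minus_1_le:
  assumes "n \<ge> 2"
  shows "CB n (n - 1) \<le> n"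
proof (rule CB_le)
  fix C
  assume C: "is_perm_code n (n - 1) C"
  then have perms: "C \<subseteq> perms n"
    by (simp add: is_perm_code_def)
  then have "finite C"
    by (rule finite_subset) simp
  have disjoint: "charset p \<inter> charset q = {}" if "p \<in> C" "q \<in> C" "p \<noteq> q" for p q
  proof (rule charset_disjoint_if_card_le_dB)
    have "n - 1 \<le> dB p q"
      using C that unfolding is_perm_code_def by blast
    then show "card (charset p) \<le> dB p q"
      using perms that(1) card_charset_perms by auto
  qed
  have "(\<Sum>p\<in>C. card (charset p)) = (\<Sum>p\<in>C. n - 1)"
    using perms by (intro sum.cong) (auto simp: card_charset_perms)
  then have "card C * (n - 1) = (\<Sum>p\<in>C. card (charset p))"
    by simp
  also have "\<dots> = card (\<Union>p\<in>C. charset p)"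
    by (rule card_UN_disjoint[symmetric]) (use disjoint \<open>finite C\<close> in auto)
  also have "\<dots> \<le> card ({1..n} \<times> {1..n} - Id)"
  proof (intro card_mono UN_least)
    fix p
    assume "p \<in> C"
    with perms have "distinct p" "set p = {1..n}"
      by (auto simp: perms_def)
    then show "charset p \<subseteq> {1..n} \<times> {1..n} - Id"
      using charset_subset_offdiag by metis
  qed simp
  also have "\<dots> = n * (n - 1)"
    by (simp add: card_Times_minus_Id)
  finally show "card C \<le> n"
    using assms by simp
qed

lemma CB_ge_if_arc_disjoint:
  assumes "N \<ge> 2" "card I = N"
    and perm: "\<And>i. i \<in> I \<Longrightarrow> distinct (P i) \<and> set (P i) = {0..<N}"
    and disjoint:
      "\<And>i j. i \<in> I \<Longrightarrow> j \<in> I \<Longrightarrow> i \<noteq> j \<Longrightarrow> charset (P i) \<inter> charset (P j) = {}"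
  shows "N \<le> CB N (N - 1)"
proof -
  define Q where "Q i = map Suc (P i)" for i
  have Q_perms: "Q i \<in> perms N" if "i \<in> I" for i
  proof -
    have "Suc ` {0..<N} = {1..N}"
      by (simp add: image_Suc_atLeastLessThan atLeastLessThanSuc_atLeastAtMost)
    with perm[OF that] show ?thesis
      by (simp add: Q_def perms_def distinct_map)
  qed
  have Q_disjoint: "charset (Q i) \<inter> charset (Q j) = {}" if "i \<in> I" "j \<in> I" "i \<noteq> j" for i j
    using disjoint[OF that] by (auto simp: Q_def charset_map)
  have Q_nonempty: "charset (Q i) \<noteq> {}" if "i \<in> I" for i
    using card_charset_perms[OF Q_perms[OF that]] \<open>N \<ge> 2\<close> by fastforce
  have "inj_on Q I"
    using Q_disjoint Q_nonempty by (metis inf.idem inj_onI)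
  have "is_perm_code N (N - 1) (Q ` I)"
    unfolding is_perm_code_def
  proof (intro conjI ballI impI)
    show "Q ` I \<subseteq> perms N"
      using Q_perms by blast
    fix p q
    assume "p \<in> Q ` I" "q \<in> Q ` I" "p \<noteq> q"
    then obtain i j where "i \<in> I" "j \<in> I" "i \<noteq> j" "p = Q i" "q = Q j"
      by blast
    then have "dB p q = card (charset (Q i))"
      using Q_disjoint by (simp add: dB_def Diff_triv)
    then show "N - 1 \<le> dB p q"
      using card_charset_perms[OF Q_perms[OF \<open>i \<in> I\<close>]] by simp
  qed
  moreover have "card (Q ` I) = N"
    using \<open>inj_on Q I\<close> assms(2) by (simp add: card_image)
  ultimately show ?thesis
    using card_le_CB by metis
qed

section \<open>The Walecki decomposition\<close>

definition zigzag :: "nat \<Rightarrow> int" where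
  "zigzag k = (if even k then - int (k div 2) else int ((k + 1) div 2))"

definition walecki_vertex :: "nat \<Rightarrow> nat \<Rightarrow> nat \<Rightarrow> nat" where
  "walecki_vertex n i k = nat ((int i + zigzag k) mod int n)"

definition walecki_path :: "nat \<Rightarrow> nat \<Rightarrow> nat list" where
  "walecki_path n i = map (walecki_vertex n i) [0..<n]"

definition walecki_cycle :: "nat \<Rightarrow> nat \<Rightarrow> nat list" where
  "walecki_cycle n i = n # walecki_path n i"

(*
  Vertex n plays the role of \<infinity>: walecki_cycle n i is \<infinity>, i, i + 1, i - 1, i + 2, ..., i + n/2
  (mod n). An arc (u, v) with v - u = 2s + 1 (mod n) occurs only as the step i - s \<rightarrow> i + s + 1, and
  one with u - v = 2s (mod n), 0 < s, only as the step i + s \<rightarrow> i - s; arc_index n u v is this i.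
*)
definition arc_index :: "nat \<Rightarrow> nat \<Rightarrow> nat \<Rightarrow> nat" where
  "arc_index n u v =
    (if u = n then v
     else if v = n then (u + n div 2) mod n
     else nat (let d = (int v - int u) mod int n in
       if odd d then (int u + (d - 1) div 2) mod int n
       else (int u + int n div 2 + d div 2) mod int n))"

lemma zigzag_even [simp]: "zigzag (2 * s) = - int s"
  by (simp add: zigzag_def)

lemma zigzag_odd [simp]: "zigzag (Suc (2 * s)) = int s + 1"
  by (simp add: zigzag_def)

lemma zigzag_inj: "zigzag k = zigzag l \<Longrightarrow> k = l"
  by (simp add: zigzag_def split: if_splits; presburger)

lemma zigzag_bounds: "k < 2 * h \<Longrightarrow> 1 - int h \<le> zigzag k \<and> zigzag k \<le> int h"
  by (cases k rule: parity_cases) (auto simp: zigzag_def)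

lemma arc_index_odd_gap:
  assumes "u < n" "v < n" "(int v - int u) mod int n = 2 * s + 1"
  shows "int (arc_index n u v) = (int u + s) mod int n"
  using assms by (simp add: arc_index_def)

lemma arc_index_even_gap:
  assumes "even n" "u < n" "v < n" "(int u - int v) mod int n = 2 * s" "0 < s"
  shows "int (arc_index n u v) = (int u - s) mod int n"
proof -
  obtain h where h: "int n = 2 * h"
    using assms(1) by (metis evenE of_nat_mult of_nat_numeral)
  have "(int v - int u) mod int n = int n - 2 * s"
    using assms(4,5) zmod_zminus1_eq_if[of "int u - int v" "int n"] by simp
  then have "int (arc_index n u v) = (int u + h + (h - s)) mod int n"
    using assms(2,3) h by (simp add: arc_index_def)
  also have "\<dots> = (int u - s + int n) mod int n"
    using h by (simp add: algebra_simps)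
  also have "\<dots> = (int u - s) mod int n"
    by simp
  finally show ?thesis .
qed

lemma int_walecki_vertex: "0 < n \<Longrightarrow> int (walecki_vertex n i k) = (int i + zigzag k) mod int n"
  by (simp add: walecki_vertex_def)

lemma walecki_vertex_less: "0 < n \<Longrightarrow> walecki_vertex n i k < n"
  by (simp add: walecki_vertex_def nat_less_iff)

lemma arc_index_walecki_vertex:
  assumes "even n" "i < n" "Suc k < n"
  shows "arc_index n (walecki_vertex n i k) (walecki_vertex n i (Suc k)) = i"
proof -
  have n: "0 < n"
    using assms(3) by simp
  note vertex = int_walecki_vertex[OF n] walecki_vertex_less[OF n]
  consider (even) s where "k = 2 * s" | (odd) s where "k = 2 * s + 1"
    by (metis evenE oddE)
  then have "int (arc_index n (walecki_vertex n i k) (walecki_vertex n i (Suc k))) = int i"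
  proof cases
    case (even s)
    have "(int (walecki_vertex n i (Suc k)) - int (walecki_vertex n i k)) mod int n =
        (2 * int s + 1) mod int n"
      using even by (simp add: vertex mod_diff_eq)
    also have "\<dots> = 2 * int s + 1"
      using assms(3) even by simp
    finally show ?thesis
      using arc_index_odd_gap vertex even assms(2) by (simp add: mod_add_left_eq)
  next
    case (odd s)
    have "zigzag (Suc k) = - int s - 1"
      using odd zigzag_even[of "s + 1"] by simp
    then have "(int (walecki_vertex n i k) - int (walecki_vertex n i (Suc k))) mod int n =
        (2 * (int s + 1)) mod int n"
      using odd by (simp add: vertex mod_diff_eq)
    also have "\<dots> = 2 * (int s + 1)"
      using assms(3) odd by simp
    finally show ?thesis
      using arc_index_even_gap[of n, where s = "int s + 1"] vertex odd assms(1,2)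
      by (simp add: mod_diff_left_eq)
  qed
  then show ?thesis
    by simp
qed

lemma walecki_vertex_inj:
  assumes "even n" "k < n" "l < n" "walecki_vertex n i k = walecki_vertex n i l"
  shows "k = l"
proof -
  obtain h where h: "n = 2 * h"
    using assms(1) by blast
  have "(int i + zigzag k) mod int n = (int i + zigzag l) mod int n"
    using assms(2,4) int_walecki_vertex[of n i] by (metis gr_implies_not0 neq0_conv)
  then have "int n dvd zigzag k - zigzag l"
    by (simp add: mod_eq_dvd_iff)
  moreover have "\<bar>zigzag k - zigzag l\<bar> < int n"
    using zigzag_bounds[of k h] zigzag_bounds[of l h] assms(2,3) h by linarith
  ultimately have "zigzag k = zigzag l"
    by (metis dvd_imp_le_int abs_ge_zero eq_iff_diff_eq_0 not_le order.strict_trans2 abs_of_nat)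
  then show ?thesis
    by (rule zigzag_inj)
qed

lemma distinct_walecki_path: "even n \<Longrightarrow> distinct (walecki_path n i)"
  by (auto simp: walecki_path_def distinct_map inj_on_def dest: walecki_vertex_inj)

lemma set_walecki_path:
  assumes "even n"
  shows "set (walecki_path n i) = {0..<n}"
proof -
  have "set (walecki_path n i) \<subseteq> {0..<n}"
    by (auto simp: walecki_path_def walecki_vertex_less)
  moreover have "card (set (walecki_path n i)) = n"
    using distinct_card[OF distinct_walecki_path[OF assms]] by (simp add: walecki_path_def)
  ultimately show ?thesis
    by (simp add: card_subset_eq)
qed

lemma arc_index_walecki_path:
  "even n \<Longrightarrow> i < n \<Longrightarrow> (u, v) \<in> charset (walecki_path n i) \<Longrightarrow> arc_index n u v = i"
  by (auto simp: walecki_path_def charset_map_upt arc_index_walecki_vertex)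

lemma hd_walecki_path: "i < n \<Longrightarrow> hd (walecki_path n i) = i"
  by (simp add: walecki_path_def walecki_vertex_def hd_map upt_conv_Cons zigzag_def)

lemma last_walecki_path:
  assumes "even n" "0 < n"
  shows "last (walecki_path n i) = (i + n div 2) mod n"
proof -
  have zigzag_last: "zigzag (Suc (2 * (n div 2 - 1))) = int (n div 2)"
    using assms by (auto elim!: evenE)
  have "last (walecki_path n i) = walecki_vertex n i (n - 1)"
    using assms(2) by (simp add: walecki_path_def last_map)
  also have "n - 1 = Suc (2 * (n div 2 - 1))"
    using assms by (auto elim!: evenE)
  also have "walecki_vertex n i (Suc (2 * (n div 2 - 1))) = (i + n div 2) mod n"
    using zigzag_last by (simp add: walecki_vertex_def nat_mod_distrib nat_add_distrib)
  finally show ?thesis .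
qed

lemma distinct_walecki_cycle: "even n \<Longrightarrow> distinct (walecki_cycle n i)"
  by (simp add: walecki_cycle_def distinct_walecki_path set_walecki_path)

lemma set_walecki_cycle: "even n \<Longrightarrow> set (walecki_cycle n i) = {0..<Suc n}"
  by (auto simp: walecki_cycle_def set_walecki_path)

lemma arc_index_walecki_cycle:
  assumes "even n" "i < n" "(u, v) \<in> cyclic_charset (walecki_cycle n i)"
  shows "arc_index n u v = i"
proof -
  have "walecki_path n i \<noteq> []"
    using assms(2) by (simp add: walecki_path_def)
  then have "cyclic_charset (walecki_cycle n i) =
      insert (n, i) (insert ((i + n div 2) mod n, n) (charset (walecki_path n i)))"
    using assms
    by (auto simp: cyclic_charset_def walecki_cycle_def charset_Cons hd_walecki_path last_walecki_path)
  moreover have "arc_index n ((i + n div 2) mod n) n = i"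
  proof -
    have "n div 2 + n div 2 = n"
      using assms(1) by auto
    then have "((i + n div 2) mod n + n div 2) mod n = (i + n) mod n"
      by (simp add: mod_add_left_eq add.assoc)
    moreover have "(i + n div 2) mod n \<noteq> n"
      using assms(2) mod_less_divisor[of n "i + n div 2"] by linarith
    ultimately show ?thesis
      using assms(2) by (simp add: arc_index_def)
  qed
  moreover have "arc_index n n i = i"
    by (simp add: arc_index_def)
  ultimately show ?thesis
    using assms(3) arc_index_walecki_path[OF assms(1,2), of u v] by auto
qed

lemma walecki_cycles_disjoint:
  assumes "even n" "i < n" "j < n" "i \<noteq> j"
  shows "cyclic_charset (walecki_cycle n i) \<inter> cyclic_charset (walecki_cycle n j) = {}"
  using assms arc_index_walecki_cycle[OF assms(1,2)] arc_index_walecki_cycle[OF assms(1,3)] by fastforce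

lemma CB_ge_even:
  assumes "even N" "N \<ge> 2"
  shows "N \<le> CB N (N - 1)"
proof (rule CB_ge_if_arc_disjoint[where I = "{0..<N}" and P = "walecki_path N"])
  fix i j
  assume "i \<in> {0..<N}" "j \<in> {0..<N}" "i \<noteq> j"
  then show "charset (walecki_path N i) \<inter> charset (walecki_path N j) = {}"
    using arc_index_walecki_path[OF assms(1), of i] arc_index_walecki_path[OF assms(1), of j]
    by fastforce
qed (use assms distinct_walecki_path set_walecki_path in auto)

lemma cut_walecki_cycle_avoiding:
  assumes "even n" "i < n" and transversal: "inj_on (\<lambda>(u, v). arc_index n u v) (charset R)"
  shows "\<exists>P. distinct P \<and> set P = {0..<Suc n} \<and>
    charset P \<subseteq> cyclic_charset (walecki_cycle n i) \<and> charset P \<inter> charset R = {}"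
proof -
  have "x = y" if "x \<in> charset R \<inter> cyclic_charset (walecki_cycle n i)"
    "y \<in> charset R \<inter> cyclic_charset (walecki_cycle n i)" for x y
  proof -
    have "(\<lambda>(u, v). arc_index n u v) x = (\<lambda>(u, v). arc_index n u v) y"
      using that arc_index_walecki_cycle[OF assms(1,2)] by (auto split: prod.splits)
    then show ?thesis
      using inj_onD[OF transversal] that by blast
  qed
  then obtain e where "charset R \<inter> cyclic_charset (walecki_cycle n i) \<subseteq> {e}"
    by blast
  then show ?thesis
    using cut_cycle_avoiding[OF distinct_walecki_cycle[OF assms(1)]] set_walecki_cycle[OF assms(1)]
    by metis
qed

lemma CB_ge_odd_if_transversal:
  assumes "even n" "n \<ge> 2" "distinct R" "set R = {0..<Suc n}"
    and transversal: "inj_on (\<lambda>(u, v). arc_index n u v) (charset R)"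
  shows "Suc n \<le> CB (Suc n) n"
proof -
  obtain P where P: "\<And>i. i < n \<Longrightarrow> distinct (P i) \<and> set (P i) = {0..<Suc n} \<and>
      charset (P i) \<subseteq> cyclic_charset (walecki_cycle n i) \<and> charset (P i) \<inter> charset R = {}"
    using cut_walecki_cycle_avoiding[OF assms(1) _ transversal] by metis
  have "Suc n \<le> CB (Suc n) (Suc n - 1)"
  proof (rule CB_ge_if_arc_disjoint[where I = "{0..n}" and P = "\<lambda>i. if i < n then P i else R"])
    fix i j
    assume "i \<in> {0..n}" "j \<in> {0..n}" "i \<noteq> j"
    show "charset (if i < n then P i else R) \<inter> charset (if j < n then P j else R) = {}"
    proof (cases "i < n \<and> j < n")
      case True
      then have "charset (P i) \<inter> charset (P j) \<subseteq>
          cyclic_charset (walecki_cycle n i) \<inter> cyclic_charset (walecki_cycle n j)"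
        using P[of i] P[of j] by auto
      with True show ?thesis
        using walecki_cycles_disjoint[OF assms(1)] \<open>i \<noteq> j\<close> by auto
    next
      case False
      with \<open>i \<in> {0..n}\<close> \<open>j \<in> {0..n}\<close> \<open>i \<noteq> j\<close> show ?thesis
        using P[of i] P[of j] by (cases "i < n") auto
    qed
  qed (use assms P in auto)
  then show ?thesis
    by simp
qed

section \<open>Transversal paths\<close>

(*
  A certificate, free of mod m, that (u, v) lies on the Walecki cycle i of the vertex set {0..m}
  with \<infinity> = m, for the kinds of arcs occurring in the transversals below: arcs at \<infinity> and steps down
  by 1, by 4, or cyclically by 2. For piecewise linear paths it is decided by linear arithmetic.
*)
definition short_arc :: "int \<Rightarrow> int \<Rightarrow> int \<Rightarrow> int \<Rightarrow> bool" where
  "short_arc m u v i \<longleftrightarrow> 0 \<le> i \<and> i < m \<and> 0 \<le> u \<and> 0 \<le> v \<and>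
    ((u = m \<and> v < m \<and> i = v) \<or>
     (u < m \<and> v = m \<and> (i = u + m div 2 \<or> i = u - m div 2)) \<or>
     (u < m \<and> v < m \<and> (u - v = 2 \<or> u - v = 2 - m) \<and> (i = u - 1 \<or> i = u - 1 + m)) \<or>
     (u < m \<and> v < m \<and> u - v = 4 \<and> i = u - 2) \<or>
     (u < m \<and> v < m \<and> u - v = 1 \<and> (i = u + m div 2 - 1 \<or> i = u - m div 2 - 1)))"

lemma mod_eq_if_shift:
  fixes a i m :: int
  shows "0 \<le> i \<Longrightarrow> i < m \<Longrightarrow> a = i \<or> a = i + m \<or> a = i - m \<Longrightarrow> a mod m = i"
  by auto

lemma arc_index_short_arc:
  assumes "even n" "6 \<le> n" "short_arc (int n) u v i"
  shows "arc_index n (nat u) (nat v) = nat i"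
proof -
  obtain h where h: "int n = 2 * h"
    using assms(1) by (metis evenE of_nat_mult of_nat_numeral)
  then have half: "int n div 2 = h"
    by simp
  have range: "0 \<le> i" "i < int n" "0 \<le> u" "0 \<le> v"
    using assms(3) by (auto simp: short_arc_def)
  have down: "int (arc_index n (nat u) (nat v)) = (u - s) mod int n"
    if "u < int n" "v < int n" "(u - v) mod int n = 2 * s" "0 < s" for s
    using arc_index_even_gap[OF assms(1), of "nat u" "nat v" s] that range by simp
  consider (from_inf) "u = int n" "v < int n" "i = v"
    | (to_inf) "u < int n" "v = int n" "i = u + h \<or> i = u - h"
    | (down2) "u < int n" "v < int n" "u - v = 2 \<or> u - v = 2 - int n"
        "i = u - 1 \<or> i = u - 1 + int n"
    | (down4) "u < int n" "v < int n" "u - v = 4" "i = u - 2"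
    | (down1) "u < int n" "v < int n" "u - v = 1" "i = u + h - 1 \<or> i = u - h - 1"
    using assms(3) half by (auto simp: short_arc_def)
  then have "\<exists>x. int (arc_index n (nat u) (nat v)) = x mod int n \<and>
      (x = i \<or> x = i + int n \<or> x = i - int n)"
  proof cases
    case from_inf
    with range show ?thesis
      by (intro exI[of _ i]) (simp add: arc_index_def)
  next
    case to_inf
    with range h half show ?thesis
      by (intro exI[of _ "u + h"]) (auto simp: arc_index_def zmod_int zdiv_int)
  next
    case down2
    with assms(2) have "(u - v) mod int n = 2 * 1"
      by auto
    with down2 down show ?thesis
      by (intro exI[of _ "u - 1"]) auto
  next
    case down4
    with assms(2) have "(u - v) mod int n = 2 * 2"
      by auto
    with down4 down show ?thesis
      by (intro exI[of _ "u - 2"]) auto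
  next
    case down1
    with range have "int (nat v) - int (nat u) = - 1"
      by simp
    with h assms(2) have "(int (nat v) - int (nat u)) mod int n = 2 * (h - 1) + 1"
      by (simp add: zmod_zminus1_eq_if)
    then have "int (arc_index n (nat u) (nat v)) = (u + (h - 1)) mod int n"
      using arc_index_odd_gap[of "nat u" n "nat v"] down1 range by simp
    with down1 h show ?thesis
      by (intro exI[of _ "u + (h - 1)"]) auto
  qed
  with range show ?thesis
    using mod_eq_if_shift by force
qed

lemma permutation_of_int_bijection:
  fixes g :: "int \<Rightarrow> int"
  assumes g_inj: "inj_on g {0..int n}" and g_range: "g ` {0..int n} \<subseteq> {0..int n}"
  defines "R \<equiv> map (\<lambda>t. nat (g (int t))) [0..<Suc n]"
  shows "distinct R" "set R = {0..<Suc n}"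
proof -
  have g: "0 \<le> g (int t) \<and> g (int t) \<le> int n" if "t < Suc n" for t
    using g_range that unfolding image_subset_iff by simp
  have "inj_on (\<lambda>t. nat (g (int t))) {0..<Suc n}"
  proof (rule inj_onI)
    fix s t
    assume "s \<in> {0..<Suc n}" "t \<in> {0..<Suc n}" "nat (g (int s)) = nat (g (int t))"
    with g have "g (int s) = g (int t)"
      by (metis atLeastLessThan_iff nat_0_le)
    moreover from \<open>s \<in> {0..<Suc n}\<close> \<open>t \<in> {0..<Suc n}\<close>
    have "int s \<in> {0..int n}" "int t \<in> {0..int n}"
      by auto
    ultimately have "int s = int t"
      using inj_onD[OF g_inj] by blast
    then show "s = t"
      by simp
  qed
  then show "distinct R"
    by (simp add: R_def distinct_map del: upt_Suc)
  moreover have "nat (g (int t)) < Suc n" if "t < Suc n" for t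
    using g[OF that] by (simp add: less_Suc_eq_le nat_le_iff)
  then have "set R \<subseteq> {0..<Suc n}"
    by (auto simp: R_def simp del: upt_Suc)
  ultimately show "set R = {0..<Suc n}"
    using distinct_card[of R] by (simp add: R_def card_subset_eq)
qed

lemma CB_ge_odd_if_short_arc_path:
  fixes g e :: "int \<Rightarrow> int"
  assumes "even n" "6 \<le> n"
    and g_inj: "inj_on g {0..int n}" and g_range: "g ` {0..int n} \<subseteq> {0..int n}"
    and e_inj: "inj_on e {0..<int n}"
    and arcs: "\<And>t. 0 \<le> t \<Longrightarrow> t < int n \<Longrightarrow> short_arc (int n) (g t) (g (t + 1)) (e t)"
  shows "Suc n \<le> CB (Suc n) n"
proof -
  define f where "f = (\<lambda>t. nat (g (int t)))"
  have arc_index: "arc_index n (f t) (f (Suc t)) = nat (e (int t))" if "t < n" for t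
    using arc_index_short_arc[OF assms(1,2) arcs[of "int t"]] that by (simp add: f_def add.commute)
  have arcs_f: "charset (map f [0..<Suc n]) = {(f t, f (Suc t)) | t. t < n}"
    by (simp add: charset_map_upt del: upt_Suc)
  have "inj_on (\<lambda>(u, v). arc_index n u v) (charset (map f [0..<Suc n]))"
  proof (rule inj_onI)
    fix x y
    assume "x \<in> charset (map f [0..<Suc n])" "y \<in> charset (map f [0..<Suc n])"
      and eq: "(\<lambda>(u, v). arc_index n u v) x = (\<lambda>(u, v). arc_index n u v) y"
    then obtain s t where st: "s < n" "t < n" "x = (f s, f (Suc s))" "y = (f t, f (Suc t))"
      unfolding arcs_f by blast
    have "0 \<le> e (int s)" "0 \<le> e (int t)"
      using arcs st by (auto simp: short_arc_def)
    with eq st arc_index have "e (int s) = e (int t)"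
      by simp
    with e_inj st have "s = t"
      by (auto dest: inj_onD)
    with st show "x = y"
      by simp
  qed
  with assms(1,2) permutation_of_int_bijection[OF g_inj g_range, folded f_def] show ?thesis
    by (intro CB_ge_odd_if_transversal) simp_all
qed

(*
  The path 0, 4p, 4p-2, ..., 2p+4, 2p, 2p-2, ..., 2, \<infinity>, 2p+1, 2p-1, ..., 1, 4p+1, 4p-1, ..., 2p+3, 2p+2
  with \<infinity> = 4p+2, and the Walecki cycle containing its t-th arc.
*)
definition transversal3_vertex :: "int \<Rightarrow> int \<Rightarrow> int" where
  "transversal3_vertex p t =
    (if t = 0 then 0 else if t \<le> p - 1 then 4*p + 2 - 2*t else if t \<le> 2*p - 1 then 4*p - 2*t
     else if t = 2*p then 4*p + 2 else if t \<le> 3*p + 1 then 6*p + 3 - 2*t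
     else if t \<le> 4*p + 1 then 10*p + 5 - 2*t else 2*p + 2)"

definition transversal3_cycle :: "int \<Rightarrow> int \<Rightarrow> int" where
  "transversal3_cycle p t =
    (if t = 0 then 4*p + 1 else if t \<le> p - 2 then 4*p + 1 - 2*t else if t = p - 1 then 2*p + 2
     else if t \<le> 2*p - 2 then 4*p - 2*t - 1 else if t = 2*p - 1 then 2*p + 3
     else if t = 2*p then 2*p + 1 else if t \<le> 3*p then 6*p + 2 - 2*t
     else if t = 3*p + 1 then 0 else if t \<le> 4*p then 10*p + 4 - 2*t else 1)"

lemma transversal3_vertex_inj:
  "p \<ge> 2 \<Longrightarrow> 0 \<le> t \<Longrightarrow> t \<le> 4*p + 2 \<Longrightarrow> 0 \<le> t' \<Longrightarrow> t' \<le> 4*p + 2 \<Longrightarrow>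
    transversal3_vertex p t = transversal3_vertex p t' \<Longrightarrow> t = t'"
  unfolding transversal3_vertex_def by (auto split: if_splits; presburger)

lemma transversal3_vertex_range: "p \<ge> 2 \<Longrightarrow> transversal3_vertex p ` {0..4*p + 2} \<subseteq> {0..4*p + 2}"
  by (auto simp: transversal3_vertex_def)

lemma transversal3_cycle_inj:
  "p \<ge> 2 \<Longrightarrow> 0 \<le> t \<Longrightarrow> t < 4*p + 2 \<Longrightarrow> 0 \<le> t' \<Longrightarrow> t' < 4*p + 2 \<Longrightarrow>
    transversal3_cycle p t = transversal3_cycle p t' \<Longrightarrow> t = t'"
  unfolding transversal3_cycle_def by (auto split: if_splits; presburger)

lemma short_arc_transversal3:
  "p \<ge> 2 \<Longrightarrow> 0 \<le> t \<Longrightarrow> t < 4*p + 2 \<Longrightarrow>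
    short_arc (4*p + 2) (transversal3_vertex p t) (transversal3_vertex p (t + 1))
      (transversal3_cycle p t)"
  unfolding short_arc_def transversal3_vertex_def transversal3_cycle_def by auto

lemma CB_ge_3_mod_4:
  assumes "p \<ge> 2"
  shows "4*p + 3 \<le> CB (4*p + 3) (4*p + 2)"
proof -
  have n: "int (4*p + 2) = 4 * int p + 2"
    by simp
  have "Suc (4*p + 2) \<le> CB (Suc (4*p + 2)) (4*p + 2)"
  proof (rule CB_ge_odd_if_short_arc_path[where g = "transversal3_vertex p" and e = "transversal3_cycle p"],
      unfold n)
    show "inj_on (transversal3_vertex p) {0..4 * int p + 2}"
      using transversal3_vertex_inj[of "int p"] assms by (auto simp: inj_on_def)
    show "inj_on (transversal3_cycle p) {0..<4 * int p + 2}"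
      using transversal3_cycle_inj[of "int p"] assms by (auto simp: inj_on_def)
  qed (use assms transversal3_vertex_range short_arc_transversal3 in auto)
  moreover have "Suc (4*p + 2) = 4*p + 3"
    by simp
  ultimately show ?thesis
    by metis
qed

(*
  The path 0, 4p-2, 4p-4, ..., 2p+4, 2p, 2p-2, ..., 2, 1, 4p-1, 4p-3, ..., 2p+3, 2p+2, 2p+1, 2p-1, ..., 3, \<infinity>
  with \<infinity> = 4p, and the Walecki cycle containing its t-th arc.
*)
definition transversal1_vertex :: "int \<Rightarrow> int \<Rightarrow> int" where
  "transversal1_vertex p t =
    (if t = 0 then 0 else if t \<le> p - 2 then 4*p - 2*t else if t \<le> 2*p - 2 then 4*p - 2 - 2*t
     else if t = 2*p - 1 then 1 else if t \<le> 3*p - 2 then 8*p - 1 - 2*t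
     else if t = 3*p - 1 then 2*p + 2 else if t \<le> 4*p - 1 then 8*p + 1 - 2*t else 4*p)"

definition transversal1_cycle :: "int \<Rightarrow> int \<Rightarrow> int" where
  "transversal1_cycle p t =
    (if t = 0 then 4*p - 1 else if t \<le> p - 3 then 4*p - 2*t - 1 else if t = p - 2 then 2*p + 2
     else if t \<le> 2*p - 3 then 4*p - 3 - 2*t else if t = 2*p - 2 then 2*p + 1
     else if t = 2*p - 1 then 0 else if t \<le> 3*p - 3 then 8*p - 2 - 2*t
     else if t = 3*p - 2 then 2 else if t = 3*p - 1 then 1 else if t \<le> 4*p - 2 then 8*p - 2*t
     else 2*p + 3)"

lemma transversal1_vertex_inj:
  "p \<ge> 3 \<Longrightarrow> 0 \<le> t \<Longrightarrow> t \<le> 4*p \<Longrightarrow> 0 \<le> t' \<Longrightarrow> t' \<le> 4*p \<Longrightarrow>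
    transversal1_vertex p t = transversal1_vertex p t' \<Longrightarrow> t = t'"
  unfolding transversal1_vertex_def by (auto split: if_splits; presburger)

lemma transversal1_vertex_range: "p \<ge> 3 \<Longrightarrow> transversal1_vertex p ` {0..4*p} \<subseteq> {0..4*p}"
  by (auto simp: transversal1_vertex_def)

lemma transversal1_cycle_inj:
  "p \<ge> 3 \<Longrightarrow> 0 \<le> t \<Longrightarrow> t < 4*p \<Longrightarrow> 0 \<le> t' \<Longrightarrow> t' < 4*p \<Longrightarrow>
    transversal1_cycle p t = transversal1_cycle p t' \<Longrightarrow> t = t'"
  unfolding transversal1_cycle_def by (auto split: if_splits; presburger)

lemma short_arc_transversal1:
  "p \<ge> 3 \<Longrightarrow> 0 \<le> t \<Longrightarrow> t < 4*p \<Longrightarrow>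
    short_arc (4*p) (transversal1_vertex p t) (transversal1_vertex p (t + 1)) (transversal1_cycle p t)"
  unfolding short_arc_def transversal1_vertex_def transversal1_cycle_def by auto

lemma CB_ge_1_mod_4:
  assumes "p \<ge> 3"
  shows "4*p + 1 \<le> CB (4*p + 1) (4*p)"
proof -
  have n: "int (4*p) = 4 * int p"
    by simp
  have "Suc (4*p) \<le> CB (Suc (4*p)) (4*p)"
  proof (rule CB_ge_odd_if_short_arc_path[where g = "transversal1_vertex p" and e = "transversal1_cycle p"],
      unfold n)
    show "inj_on (transversal1_vertex p) {0..4 * int p}"
      using transversal1_vertex_inj[of "int p"] assms by (auto simp: inj_on_def)
    show "inj_on (transversal1_cycle p) {0..<4 * int p}"
      using transversal1_cycle_inj[of "int p"] assms by (auto simp: inj_on_def)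
  qed (use assms transversal1_vertex_range short_arc_transversal1 in auto)
  moreover have "Suc (4*p) = 4*p + 1"
    by simp
  ultimately show ?thesis
    by metis
qed

lemma CB_7_ge: "7 \<le> CB 7 6"
proof -
  have "Suc 6 \<le> CB (Suc 6) 6"
    by (rule CB_ge_odd_if_transversal[where R = "[0, 2, 6, 3, 1, 5, 4]"])
      (auto simp: arc_index_def)
  then show ?thesis
    by simp
qed

lemma CB_9_ge: "9 \<le> CB 9 8"
proof -
  have "Suc 8 \<le> CB (Suc 8) 8"
    by (rule CB_ge_odd_if_transversal[where R = "[0, 4, 2, 1, 7, 6, 5, 3, 8]"])
      (auto simp: arc_index_def)
  then show ?thesis
    by simp
qed

lemma CB_n_minus_1_ge:
  assumes "n \<ge> 2" "n \<notin> {3, 5}"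
  shows "n \<le> CB n (n - 1)"
proof (cases "even n")
  case True
  with assms show ?thesis
    by (intro CB_ge_even)
next
  case False
  then have "\<exists>p. n = 4 * p + 3 \<or> n = 4 * p + 1"
    by presburger
  then obtain p where "n = 4 * p + 3 \<or> n = 4 * p + 1"
    by blast
  with assms have "n = 7 \<or> n = 9 \<or> (n = 4 * p + 3 \<and> p \<ge> 2) \<or> (n = 4 * p + 1 \<and> p \<ge> 3)"
    by auto
  then show ?thesis
    using CB_7_ge CB_9_ge CB_ge_3_mod_4[of p] CB_ge_1_mod_4[of p] by (elim disjE conjE) simp_all
qed

theorem mainTheorem1:
  fixes n :: nat
  assumes "n \<ge> 2"
  shows "CB n 1 = fact n \<and> CB n 2 = fact (n - 1) \<and> CB n (n - 1) \<le> n \<and>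
         (n \<notin> {3, 5} \<longrightarrow> CB n (n - 1) = n)"
  using CB_1 CB_2 CB_n_minus_1_le[OF assms] CB_n_minus_1_ge[OF assms] assms
  by (simp add: le_antisym)

end
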